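(* Let $d\ge 2$ and let $f$ be a monic centered polynomial of degree $d^2$. Then the following are equivalent: (1) $f(z)=(z^d+a)^d+b$ for some $a\in\mathbb{C}\setminus\{0\}$ and $b\in\mathbb{C}$; (2) $f$ has exactly $d+1$ distinct critical points $\alpha_1,\dots,\alpha_{d+1}$, with local degree $\deg_{\alpha_i}(f)=d$ for each $i$, and such that $f(\alpha_1)=f(\alpha_2)=\cdots=f(\alpha_d)$.
   Context: A polynomial is monic if its leading coefficient is $1$ and centered if the coefficient of the second highest degree term is $0$ (equivalently, the sum of its critical points, with multiplicity, is $0$). The local degree $\deg_\alpha(f)$ is the multiplicity with which $f$ takes the value $f(\alpha)$ at $\alpha$. *)

theory Defs
  imports "HOL-Computational_Algebra.Polynomial"
begin

definition monic_poly :: "complex poly \<Rightarrow> bool" where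
  "monic_poly f \<longleftrightarrow> lead_coeff f = 1"

definition centered_poly :: "complex poly \<Rightarrow> bool" where
  "centered_poly f \<longleftrightarrow> coeff f (degree f - 1) = 0"

definition crit_points :: "complex poly \<Rightarrow> complex set" where
  "crit_points f = {z. poly (pderiv f) z = 0}"

definition local_degree :: "complex poly \<Rightarrow> complex \<Rightarrow> nat" where
  "local_degree f \<alpha> = order \<alpha> (f - [:poly f \<alpha>:])"

end

theory Submission
  imports Defs "HOL-Computational_Algebra.Fundamental_Theorem_Algebra"
begin

text \<open>
  Both directions rest on the factorisation \<open>f = g ^ d + [:c:]\<close>.  For such
  \<open>f\<close> we have \<open>f' = d \<cdot> g ^ (d - 1) \<cdot> g'\<close>, so the critical points of \<open>f\<close> are the roots
  of \<open>g\<close> together with the critical points of \<open>g\<close>; at a root \<open>z\<close> of \<open>g\<close> the local degree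
  of \<open>f\<close> is \<open>d \<cdot> order z g\<close>, and at a non-root it is \<open>1 + order z g'\<close>.

  (1) \<Longrightarrow> (2): for \<open>g = z ^ d + a\<close> with \<open>a \<noteq> 0\<close> the roots of \<open>g\<close> are the \<open>d\<close> simple
  roots of \<open>z ^ d = -a\<close> and \<open>g' = d z ^ (d - 1)\<close> vanishes only at 0, to order \<open>d - 1\<close>.

  (2) \<Longrightarrow> (1): if \<open>f\<close> takes the common value \<open>c\<close> with local degree \<open>d\<close> at \<open>d\<close> distinct
  points, then \<open>f - c\<close> (monic of degree \<open>d\<^sup>2\<close>) is the \<open>d\<close>-th power of the monic \<open>g\<close>
  vanishing at these points.  Local degree \<open>d\<close> at the remaining point \<open>\<beta>\<close> forces
  \<open>g' = d (z - \<beta>) ^ (d - 1)\<close>, i.e. \<open>g = (z - \<beta>) ^ d + e\<close>.  The subleading coefficient of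
  \<open>f\<close> is then \<open>-d\<^sup>2 \<beta>\<close>, so centering gives \<open>\<beta> = 0\<close>, and \<open>e \<noteq> 0\<close> because \<open>g\<close> has a
  nonzero root.
\<close>

lemma order_power:
  fixes p :: "'a::idom poly"
  assumes "p \<noteq> 0"
  shows "order a (p ^ n) = n * order a p"
  using assms by (induction n) (auto simp: order_mult)

lemma order_monom:
  fixes c :: "'a::idom"
  assumes "c \<noteq> 0"
  shows "order z (monom c n) = (if z = 0 then n else 0)"
proof (cases "z = 0")
  case True
  have "monom c n = smult c ([:-0,1:] ^ n)" by (simp add: monom_altdef)
  then show ?thesis using True assms order_power_n_n[of 0 n] by (simp add: order_smult)
next
  case False
  then have "poly (monom c n) z \<noteq> 0" using assms by (simp add: poly_monom)
  then show ?thesis using False by (simp add: order_0I)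
qed

lemma coeff_mult_subleading:
  fixes p q :: "'a::comm_semiring_1 poly"
  assumes "degree p = m" "degree q = n" "m \<ge> 1" "n \<ge> 1"
  shows "coeff (p * q) (m + n - 1) = coeff p (m - 1) * coeff q n + coeff p m * coeff q (n - 1)"
proof -
  have vanish: "coeff p i * coeff q (m + n - 1 - i) = 0" if "i \<notin> {m - 1, m}" for i
  proof (cases "i > m")
    case True then show ?thesis using assms by (simp add: coeff_eq_0)
  next
    case False
    then have "m + n - 1 - i > n" using that assms by auto
    then show ?thesis using assms by (simp add: coeff_eq_0)
  qed
  have "coeff (p * q) (m + n - 1) = (\<Sum>i\<le>m + n - 1. coeff p i * coeff q (m + n - 1 - i))"
    by (simp add: coeff_mult)
  also have "\<dots> = (\<Sum>i\<in>{m - 1, m}. coeff p i * coeff q (m + n - 1 - i))"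
    by (rule sum.mono_neutral_right) (use assms vanish in auto)
  also have "\<dots> = coeff p (m - 1) * coeff q n + coeff p m * coeff q (n - 1)"
    using assms by (simp add: add.commute)
  finally show ?thesis .
qed

text \<open>For monic \<open>p\<close> of degree \<open>m\<close>, the subleading coefficient of \<open>p ^ n\<close> is \<open>n\<close> times
  that of \<open>p\<close>; this is how the centering hypothesis is evaluated.\<close>

lemma coeff_power_subleading:
  fixes p :: "'a::idom poly"
  assumes "degree p = m" "m \<ge> 1" "lead_coeff p = 1" "n \<ge> 1"
  shows "coeff (p ^ n) (n * m - 1) = of_nat n * coeff p (m - 1)"
  using assms(4)
proof (induction n rule: dec_induct)
  case base then show ?case by simp
next
  case (step n)
  have "p \<noteq> 0" using assms(3) by auto
  then have deg: "degree (p ^ n) = n * m" using assms(1) by (simp add: degree_power_eq)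
  have lead: "lead_coeff (p ^ n) = 1" using assms by (simp add: lead_coeff_power)
  have "coeff (p ^ Suc n) (Suc n * m - 1) = coeff (p * p ^ n) (m + n * m - 1)"
    by simp
  also have "\<dots> = coeff p (m - 1) * coeff (p ^ n) (n * m) + coeff p m * coeff (p ^ n) (n * m - 1)"
    by (rule coeff_mult_subleading) (use assms deg step.hyps in auto)
  also have "\<dots> = of_nat (Suc n) * coeff p (m - 1)"
    using step.IH lead deg assms by (simp add: algebra_simps)
  finally show ?case .
qed

lemma eq_smult_linear_power_if_order_eq_degree:
  fixes p :: "'a::idom poly"
  assumes "p \<noteq> 0" "order b p = degree p"
  shows "p = smult (lead_coeff p) ([:-b,1:] ^ degree p)"
proof -
  obtain q where q: "p = [:-b,1:] ^ degree p * q"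
    using order_1[of b p] assms(2) by (metis dvdE)
  have "q \<noteq> 0" using q assms(1) by auto
  then have "degree ([:-b,1:] ^ degree p * q) = degree p + degree q"
    by (simp add: degree_mult_eq degree_linear_power)
  then have "degree p = degree p + degree q" using q by simp
  then obtain k where "q = [:k:]" by (metis add_cancel_left_right degree_0_id)
  then have pk: "p = smult k ([:-b,1:] ^ degree p)" using q by (simp add: mult.commute)
  have "lead_coeff (smult k ([:-b,1:] ^ n)) = k" for n by (simp add: lead_coeff_power)
  then have "lead_coeff p = k" by (metis pk)
  then show ?thesis using pk by simp
qed

lemma local_degree_eq_Suc_order_pderiv:
  assumes "degree f \<noteq> 0"
  shows "local_degree f z = Suc (order z (pderiv f))"
proof -
  have "f - [:poly f z:] \<noteq> 0"
    using assms by (metis degree_pCons_0 eq_iff_diff_eq_0)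
  from order_pderiv[OF this] show ?thesis
    by (simp add: local_degree_def pderiv_diff pderiv_pCons)
qed

text \<open>A monic complex polynomial of degree \<open>d \<cdot> |A|\<close> having a root of order \<open>d\<close> at each point
  of \<open>A\<close> has no other roots, hence is the \<open>d\<close>-th power of \<open>\<Prod>z\<in>A. (x - z)\<close>.\<close>

lemma monic_eq_power_of_root_product:
  fixes h :: "complex poly"
  assumes monic: "lead_coeff h = 1" and "finite A" and deg: "degree h = d * card A"
    and ord: "\<And>z. z \<in> A \<Longrightarrow> order z h = d"
  shows "h = (\<Prod>z\<in>A. [:-z,1:]) ^ d"
proof (cases "d = 0")
  case True
  then have "degree h = 0" using deg by simp
  then have "h = [:lead_coeff h:]" by (simp add: degree_0_id)
  then have "h = 1" by (metis monic one_pCons)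
  then show ?thesis using True by simp
next
  case False
  define R where "R = {z. poly h z = 0}"
  have h0: "h \<noteq> 0" using monic by auto
  have finR: "finite R" unfolding R_def using poly_roots_finite[OF h0] .
  have AR: "A \<subseteq> R" using False ord order_root unfolding R_def by auto
  have decomp: "h = (\<Prod>z\<in>R. [:-z,1:] ^ order z h)"
    using complex_poly_decompose[of h] monic unfolding R_def by simp
  have "degree h = degree (\<Prod>z\<in>R. [:-z,1:] ^ order z h)"
    using decomp by (rule arg_cong)
  also have "\<dots> = (\<Sum>z\<in>R. order z h)"
    by (simp add: degree_prod_eq_sum_degree degree_linear_power)
  also have "\<dots> = (\<Sum>z\<in>R - A. order z h) + (\<Sum>z\<in>A. order z h)"
    using sum.subset_diff[OF AR finR] .
  also have "(\<Sum>z\<in>A. order z h) = degree h" using ord deg by (simp add: mult.commute)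
  finally have "\<forall>z\<in>R - A. order z h = 0" using finR by simp
  then have "R = A" using AR h0 order_root unfolding R_def by blast
  have "(\<Prod>z\<in>A. [:-z,1:] ^ order z h) = (\<Prod>z\<in>A. [:-z,1:]) ^ d"
    by (simp add: ord prod_power_distrib)
  with decomp \<open>R = A\<close> show ?thesis by (simp only:)
qed

lemma pderiv_power_plus_const:
  fixes g :: "'a::idom poly"
  shows "pderiv (g ^ d + [:c:]) = smult (of_nat d) (g ^ (d - 1) * pderiv g)"
  by (simp add: pderiv_add pderiv_power pderiv_pCons)

lemma crit_points_power_plus_const:
  assumes "d \<ge> 2"
  shows "crit_points (g ^ d + [:c:]) = {z. poly g z = 0} \<union> {z. poly (pderiv g) z = 0}"
  using assms by (auto simp: crit_points_def pderiv_power_plus_const)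

lemma local_degree_power_plus_const_at_root:
  assumes "g \<noteq> 0" "poly g z = 0" "d \<ge> 1"
  shows "local_degree (g ^ d + [:c:]) z = d * order z g"
proof -
  have crit_value: "poly (g ^ d + [:c:]) z = c" using assms by (simp add: power_0_left)
  have "local_degree (g ^ d + [:c:]) z = order z (g ^ d)"
    unfolding local_degree_def crit_value by simp
  then show ?thesis using assms(1) by (simp add: order_power)
qed

lemma local_degree_power_plus_const_off_root:
  assumes "poly g z \<noteq> 0" "pderiv g \<noteq> 0" "d \<ge> 1"
  shows "local_degree (g ^ d + [:c:]) z = Suc (order z (pderiv g))"
proof -
  have g0: "g \<noteq> 0" using assms(1) by auto
  have dn: "(of_nat d :: complex) \<noteq> 0" using assms(3) by simp
  have "pderiv (g ^ d + [:c:]) \<noteq> 0"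
    using g0 assms(2) dn by (simp add: pderiv_power_plus_const)
  then have "degree (g ^ d + [:c:]) \<noteq> 0" by (simp add: pderiv_eq_0_iff)
  then have "local_degree (g ^ d + [:c:]) z = Suc (order z (pderiv (g ^ d + [:c:])))"
    by (rule local_degree_eq_Suc_order_pderiv)
  also have "order z (pderiv (g ^ d + [:c:])) = order z (g ^ (d - 1)) + order z (pderiv g)"
    using g0 assms(2) dn by (simp add: pderiv_power_plus_const order_smult order_mult)
  also have "order z (g ^ (d - 1)) = 0" using assms(1) by (simp add: order_0I)
  finally show ?thesis by simp
qed

lemma power_form_from_common_value:
  assumes "lead_coeff f = 1" "finite A" "A \<noteq> {}" "d \<ge> 1" "degree f = d * card A"
    and "\<And>z. z \<in> A \<Longrightarrow> local_degree f z = d" "\<And>z. z \<in> A \<Longrightarrow> poly f z = c"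
  shows "f = (\<Prod>z\<in>A. [:-z,1:]) ^ d + [:c:]"
proof -
  have "degree f \<noteq> 0" using assms(2-5) by simp
  then have deg: "degree (f - [:c:]) = degree f"
    using degree_add_eq_left[of "[:-c:]" f] by (simp add: diff_conv_add_uminus)
  then have lead: "lead_coeff (f - [:c:]) = lead_coeff f"
    using \<open>degree f \<noteq> 0\<close> by (simp add: coeff_pCons split: nat.split)
  have "f - [:c:] = (\<Prod>z\<in>A. [:-z,1:]) ^ d"
  proof (rule monic_eq_power_of_root_product)
    show "order z (f - [:c:]) = d" if "z \<in> A" for z
      using assms(6,7)[OF that] by (simp add: local_degree_def)
  qed (use assms deg lead in auto)
  then show ?thesis by (simp add: diff_eq_eq)
qed

lemma eq_shifted_power_if_order_pderiv:
  fixes g :: "complex poly"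
  assumes "lead_coeff g = 1" "degree g = d" "d \<ge> 1" "order \<beta> (pderiv g) = d - 1"
  shows "\<exists>e. g = [:-\<beta>,1:] ^ d + [:e:]"
proof -
  have dpg: "degree (pderiv g) = d - 1" using assms(2) by (simp add: degree_pderiv)
  have pg0: "pderiv g \<noteq> 0" using assms(2,3) by (simp add: pderiv_eq_0_iff)
  have "lead_coeff (pderiv g) = of_nat d"
    using assms dpg by (simp add: coeff_pderiv)
  then have "pderiv g = pderiv ([:-\<beta>,1:] ^ d)"
    using eq_smult_linear_power_if_order_eq_degree[OF pg0] assms(4) dpg
    by (simp add: pderiv_power pderiv_pCons)
  then have "pderiv (g - [:-\<beta>,1:] ^ d) = 0" by (simp add: pderiv_diff)
  then obtain e where "g - [:-\<beta>,1:] ^ d = [:e:]"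
    by (metis degree_0_id pderiv_eq_0_iff)
  then show ?thesis by (metis add.commute diff_eq_eq)
qed

text \<open>The subleading coefficient of \<open>((x - \<beta>) ^ d + e) ^ d + c\<close> is \<open>-d\<^sup>2 \<beta>\<close>; so such a
  polynomial is centered only if \<open>\<beta> = 0\<close>.\<close>

lemma coeff_subleading_shifted_model:
  fixes \<beta> e c :: complex
  assumes "d \<ge> 2"
  shows "coeff (([:-\<beta>,1:] ^ d + [:e:]) ^ d + [:c:]) (d * d - 1) = - (of_nat (d * d) * \<beta>)"
proof -
  define g where "g = [:-\<beta>,1:] ^ d + [:e:]"
  have degg: "degree g = d"
    unfolding g_def using assms by (subst degree_add_eq_left) (simp_all add: degree_linear_power)
  have "coeff [:e:] d = 0" using assms by (cases d) auto
  then have leadg: "lead_coeff g = 1"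
    unfolding degg unfolding g_def by (simp add: coeff_linear_power)
  have "coeff g (d - 1) = of_nat d * (-\<beta>)"
    using coeff_power_subleading[of "[:-\<beta>,1:]" 1 d] assms
    by (simp add: g_def coeff_pCons split: nat.split)
  moreover have "coeff (g ^ d) (d * d - 1) = of_nat d * coeff g (d - 1)"
    using coeff_power_subleading[OF degg _ leadg, of d] assms by (simp add: mult.commute)
  moreover have "d * d - 1 \<noteq> 0" using mult_le_mono[OF assms assms] by simp
  then have "coeff [:c:] (d * d - 1) = 0" by (simp add: coeff_pCons split: nat.split)
  ultimately show ?thesis unfolding g_def[symmetric] by (simp add: power2_eq_square)
qed

lemma enumerate_with_extra_point:
  assumes "finite S" "x \<notin> S"
  obtains \<alpha> :: "nat \<Rightarrow> 'a"
  where "inj_on \<alpha> {1..card S + 1}" "\<alpha> ` {1..card S} = S" "\<alpha> (card S + 1) = x"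
proof -
  obtain h where h: "bij_betw h {1..card S} S"
    using ex_bij_betw_nat_finite_1[OF assms(1)] by blast
  define \<alpha> where "\<alpha> = h(card S + 1 := x)"
  have agree: "\<alpha> i = h i" if "i \<in> {1..card S}" for i
    using that unfolding \<alpha>_def by simp
  have "\<alpha> ` {1..card S} = h ` {1..card S}" by (rule image_cong) (simp_all add: agree)
  then have image: "\<alpha> ` {1..card S} = S" using h by (simp add: bij_betw_def)
  have "inj_on \<alpha> {1..card S} \<longleftrightarrow> inj_on h {1..card S}" by (rule inj_on_cong) (rule agree)
  then have "inj_on \<alpha> {1..card S}" using h by (simp add: bij_betw_def)
  moreover have "{1..card S + 1} = insert (card S + 1) {1..card S}" by auto
  moreover have "\<alpha> (card S + 1) = x" unfolding \<alpha>_def by simp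
  ultimately show ?thesis using that image assms(2) by simp
qed

lemma pderiv_monom_plus_const:
  "pderiv (monom 1 d + [:a:]) = monom (of_nat d) (d - 1)"
  by (simp add: pderiv_add pderiv_monom pderiv_pCons)

lemma roots_of_monom_plus_const_simple:
  fixes a :: complex
  assumes "d \<ge> 1" "a \<noteq> 0" "poly (monom 1 d + [:a:]) z = 0"
  shows "order z (monom 1 d + [:a:]) = 1"
proof -
  have "z \<noteq> 0" using assms by (auto simp: poly_monom power_0_left)
  have "coeff (monom 1 d + [:a:]) d = 1" using assms(1) by (cases d) auto
  then have "monom 1 d + [:a:] \<noteq> 0" by (metis coeff_0 zero_neq_one)
  from order_pderiv[OF this assms(3)] \<open>z \<noteq> 0\<close> assms(1) show ?thesis
    by (simp add: pderiv_monom_plus_const order_monom)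
qed

lemma model_critical_structure:
  fixes a b :: complex
  assumes "d \<ge> 2" "a \<noteq> 0"
  defines "f \<equiv> (monom 1 d + [:a:]) ^ d + [:b:]" and "S \<equiv> {z. z ^ d = - a}"
  shows "crit_points f = insert 0 S" "\<And>z. z \<in> insert 0 S \<Longrightarrow> local_degree f z = d"
    "\<And>z. z \<in> S \<Longrightarrow> poly f z = b"
proof -
  define p where "p = monom 1 (d::nat) + [:a:]"
  have poly_p: "poly p z = z ^ d + a" for z unfolding p_def by (simp add: poly_monom)
  have roots: "{z. poly p z = 0} = S" unfolding S_def poly_p by (auto simp: eq_neg_iff_add_eq_0)
  have crit_p: "{z. poly (pderiv p) z = 0} = {0}"
    unfolding p_def pderiv_monom_plus_const using assms(1) by (auto simp: poly_monom)
  show "crit_points f = insert 0 S"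
    using crit_points_power_plus_const[OF assms(1), of p b] roots crit_p unfolding f_def p_def by auto
  have p0: "p \<noteq> 0" using assms(1,2) poly_p[of 0] by (auto simp: power_0_left)
  have "f = p ^ d + [:b:]" unfolding f_def p_def ..
  show "local_degree f z = d" if "z \<in> insert 0 S" for z
  proof (cases "z = 0")
    case True
    have "poly p 0 \<noteq> 0" using assms(1,2) poly_p[of 0] by (simp add: power_0_left)
    moreover have "pderiv p \<noteq> 0" using assms(1) by (simp add: p_def pderiv_monom_plus_const)
    ultimately show ?thesis using True assms(1) \<open>f = _\<close>
      by (simp add: local_degree_power_plus_const_off_root p_def pderiv_monom_plus_const order_monom)
  next
    case False
    then have "poly p z = 0" using that roots by auto
    moreover have "order z p = 1"
      using roots_of_monom_plus_const_simple[of d a z] assms \<open>poly p z = 0\<close> unfolding p_def by simp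
    ultimately show ?thesis using p0 assms(1) \<open>f = _\<close>
      by (simp add: local_degree_power_plus_const_at_root)
  qed
  show "poly f z = b" if "z \<in> S" for z
    using that assms(1) unfolding f_def S_def by (simp add: poly_monom)
qed

lemma model_from_critical_data:
  fixes f :: "complex poly"
  assumes d2: "d \<ge> 2" and monic: "lead_coeff f = 1" and centered: "centered_poly f"
    and deg: "degree f = d ^ 2" and "finite A" "card A = d" "\<beta> \<notin> A"
    and local_deg: "\<And>z. z \<in> insert \<beta> A \<Longrightarrow> local_degree f z = d"
    and common_value: "\<And>z. z \<in> A \<Longrightarrow> poly f z = c"
  shows "\<exists>a b. a \<noteq> 0 \<and> f = (monom 1 d + [:a:]) ^ d + [:b:]"
proof -
  define g where "g = (\<Prod>z\<in>A. [:-z,1:])"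
  have "A \<noteq> {}" using assms(5,6) d2 by auto
  have fg: "f = g ^ d + [:c:]"
    unfolding g_def using d2 deg local_deg common_value assms(6)
    by (intro power_form_from_common_value[OF monic assms(5) \<open>A \<noteq> {}\<close>])
       (auto simp: power2_eq_square)
  have monic_g: "lead_coeff g = 1" unfolding g_def by (simp add: lead_coeff_prod)
  have deg_g: "degree g = d"
    using assms(6) unfolding g_def by (simp add: degree_prod_eq_sum_degree)
  have roots_g: "poly g z = 0 \<longleftrightarrow> z \<in> A" for z
    unfolding g_def using assms(5) by (simp add: poly_prod)
  have "pderiv g \<noteq> 0" using deg_g d2 by (simp add: pderiv_eq_0_iff)
  then have "Suc (order \<beta> (pderiv g)) = d"
    using local_deg[of \<beta>] roots_g[of \<beta>] \<open>\<beta> \<notin> A\<close> d2 fg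
    by (simp add: local_degree_power_plus_const_off_root)
  then have "order \<beta> (pderiv g) = d - 1" by simp
  then obtain e where ge: "g = [:-\<beta>,1:] ^ d + [:e:]"
    using eq_shifted_power_if_order_pderiv[OF monic_g deg_g] d2 by fastforce
  have "coeff f (d * d - 1) = 0"
    using centered deg unfolding centered_poly_def by (simp add: power2_eq_square)
  then have "\<beta> = 0"
    using coeff_subleading_shifted_model[OF d2, of \<beta> e c] fg ge d2 by simp
  obtain w where "w \<in> A" using \<open>A \<noteq> {}\<close> by blast
  then have "w ^ d + e = 0" "w \<noteq> 0"
    using roots_g[of w] ge \<open>\<beta> = 0\<close> \<open>\<beta> \<notin> A\<close> by auto
  then have "e \<noteq> 0" using d2 by auto
  moreover have "f = (monom 1 d + [:e:]) ^ d + [:c:]"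
    using fg ge \<open>\<beta> = 0\<close> by (simp add: monom_altdef)
  ultimately show ?thesis by blast
qed

lemma model_has_critical_data:
  fixes a b :: complex
  assumes d2: "d \<ge> 2" and "a \<noteq> 0" and f: "f = (monom 1 d + [:a:]) ^ d + [:b:]"
  shows "\<exists>\<alpha> :: nat \<Rightarrow> complex.
           inj_on \<alpha> {1..d+1} \<and> \<alpha> ` {1..d+1} = crit_points f \<and>
           (\<forall>i\<in>{1..d+1}. local_degree f (\<alpha> i) = d) \<and>
           (\<forall>i\<in>{1..d}. poly f (\<alpha> i) = poly f (\<alpha> 1))"
proof -
  define S where "S = {z :: complex. z ^ d = - a}"
  have card_S: "card S = d" unfolding S_def using card_nth_roots[of "-a" d] assms(1,2) by simp
  then have "finite S" using d2 by (intro card_ge_0_finite) simp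
  moreover have "0 \<notin> S" unfolding S_def using assms(1,2) by (simp add: power_0_left)
  ultimately obtain \<alpha> :: "nat \<Rightarrow> complex"
    where inj: "inj_on \<alpha> {1..d + 1}" and image: "\<alpha> ` {1..d} = S" and last: "\<alpha> (d + 1) = 0"
    using enumerate_with_extra_point[of S 0] card_S by metis
  have crit: "crit_points f = insert 0 S"
    using model_critical_structure(1)[OF d2 \<open>a \<noteq> 0\<close>] unfolding f S_def .
  have local_deg: "local_degree f z = d" if "z \<in> insert 0 S" for z
    using model_critical_structure(2)[OF d2 \<open>a \<noteq> 0\<close>] that unfolding f S_def by blast
  have value_b: "poly f z = b" if "z \<in> S" for z
    using model_critical_structure(3)[OF d2 \<open>a \<noteq> 0\<close>] that unfolding f S_def by blast
  have "{1..d+1} = insert (d+1) {1..d}" by auto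
  then have all: "\<alpha> ` {1..d+1} = crit_points f" using image last crit by simp
  have "\<alpha> 1 \<in> S" using image d2 by auto
  show ?thesis
  proof (intro exI conjI ballI)
    show "local_degree f (\<alpha> i) = d" if "i \<in> {1..d+1}" for i
      using local_deg that all crit by blast
    show "poly f (\<alpha> i) = poly f (\<alpha> 1)" if "i \<in> {1..d}" for i
      using value_b that image \<open>\<alpha> 1 \<in> S\<close> by blast
  qed (fact inj all)+
qed

theorem lemma3p1:
  fixes f :: "complex poly" and d :: nat
  assumes "d \<ge> 2"
    and "monic_poly f" and "centered_poly f"
    and "degree f = d ^ 2"
  shows "(\<exists>a b. a \<noteq> 0 \<and> f = (monom 1 d + [:a:]) ^ d + [:b:]) \<longleftrightarrow>
         (\<exists>\<alpha> :: nat \<Rightarrow> complex.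
             inj_on \<alpha> {1..d+1} \<and> \<alpha> ` {1..d+1} = crit_points f \<and>
             (\<forall>i\<in>{1..d+1}. local_degree f (\<alpha> i) = d) \<and>
             (\<forall>i\<in>{1..d}. poly f (\<alpha> i) = poly f (\<alpha> 1)))"
    (is "_ \<longleftrightarrow> ?data")
proof
  assume "\<exists>a b. a \<noteq> 0 \<and> f = (monom 1 d + [:a:]) ^ d + [:b:]"
  then obtain a b where "a \<noteq> 0" "f = (monom 1 d + [:a:]) ^ d + [:b:]" by blast
  then show "?data" by (rule model_has_critical_data[OF assms(1)])
next
  assume ?data
  then obtain \<alpha> :: "nat \<Rightarrow> complex" where inj: "inj_on \<alpha> {1..d+1}"
    and local_deg: "\<forall>i\<in>{1..d+1}. local_degree f (\<alpha> i) = d"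
    and common_value: "\<forall>i\<in>{1..d}. poly f (\<alpha> i) = poly f (\<alpha> 1)" by blast
  have "inj_on \<alpha> {1..d}" using inj by (rule inj_on_subset) auto
  then have card: "card (\<alpha> ` {1..d}) = d" by (simp add: card_image)
  have extra: "\<alpha> (d+1) \<notin> \<alpha> ` {1..d}" using inj by (auto dest: inj_onD)
  have degrees: "local_degree f z = d" if "z \<in> insert (\<alpha> (d+1)) (\<alpha> ` {1..d})" for z
    using local_deg that by auto
  have shared_value: "poly f z = poly f (\<alpha> 1)" if "z \<in> \<alpha> ` {1..d}" for z
    using common_value that by auto
  show "\<exists>a b. a \<noteq> 0 \<and> f = (monom 1 d + [:a:]) ^ d + [:b:]"
    using model_from_critical_data[OF assms(1) _ assms(3,4) _ card extra degrees shared_value]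
      assms(2) unfolding monic_poly_def by simp
qed

end
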